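(* Let $M$ be a separable finite MDP with $p_{\mathrm{maj}},p_{\mathrm{min}}>0$ and agent rewards $\rho$. Consider the linear program (LP) in variables $\lambda\in\mathbb{R}^{S\times A}$, $c\in\mathbb{R}$: maximize $(1-\gamma)^{-1}\sum_{s\in S}\sum_{a\in A}\lambda_{s,a}R_{s,a}$ subject to $\lambda_{s,a}\ge0$ for all $s,a$; $\sum_{a}\lambda_{s',a}=(1-\gamma)D_{s'}+\gamma\sum_{s}\sum_{a}\lambda_{s,a}P_{s,a,s'}$ for all $s'\in S$; $p_z^{-1}\sum_{\tilde s\in\tilde S}\sum_{a\in A}\lambda_{(z,\tilde s),a}\rho_{(z,\tilde s),a}=c$ for all $z\in Z$. Given an optimal solution $(\lambda^*,c^* )$, define $\pi^*_{s,a}=\lambda^*_{s,a}/\sum_{a'}\lambda^*_{s,a'}$ whenever $\sum_{a'}\lambda^*_{s,a'}>0$, and let $\pi^*_{s,\cdot}$ be an arbitrary probability distribution on $A$ otherwise. Then the LP is feasible if and only if $\Pi_{\mathrm{DP}}\neq\varnothing$; and in that case the LP has an optimal solution, and for every optimal solution $(\lambda^*,c^* )$ the policy $\pi^*$ is an optimal solution of problem (P), with $R^{(\pi^* )}$ equal to the optimal value of the LP.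
   Context: A finite MDP is $M=(S,A,D,P,R,\gamma)$ where $S,A$ are finite nonempty sets, $D$ is a probability distribution on $S$, $P_{s,a,s'}\ge 0$ with $\sum_{s'}P_{s,a,s'}=1$ for all $s,a$, $R\in\mathbb{R}^{S\times A}$, and $\gamma\in(0,1)$. A policy is $\pi\in\mathbb{R}^{S\times A}$ with $\pi_{s,a}\ge0$ and $\sum_a\pi_{s,a}=1$. Let $P^{(\pi)}_{s,s'}=\sum_a\pi_{s,a}P_{s,a,s'}$. For a distribution $\mu$ on $S$ set $\mu^{(\pi,0)}=\mu$, $\mu^{(\pi,t)}_{s'}=\sum_s\mu^{(\pi,t-1)}_sP^{(\pi)}_{s,s'}$, and $\mu^{(\pi)}=(1-\gamma)\sum_{t\ge0}\gamma^t\mu^{(\pi,t)}$. Write $D^{(\pi)}$ for $\mu=D$, $\Lambda^{(\pi)}_{s,a}=D^{(\pi)}_s\pi_{s,a}$, and $R^{(\pi)}=(1-\gamma)^{-1}\sum_{s,a}\Lambda^{(\pi)}_{s,a}R_{s,a}$. Fairness setup: $S=Z\times\tilde S$ with $Z=\{\mathrm{maj},\mathrm{min}\}$ and $\tilde S$ finite nonempty; agent rewards $\rho\in\mathbb{R}^{S\times A}$. For $z\in Z$, $p_z=\sum_{\tilde s}D_{(z,\tilde s)}$, $D_z$ is the distribution $(D_z)_s=D_s\cdot\mathbb{I}[s=(z,\tilde s)\text{ for some }\tilde s]/p_z$, $D_z^{(\pi)}$ is $\mu^{(\pi)}$ for $\mu=D_z$, $(\Lambda_z^{(\pi)})_{s,a}=(D_z^{(\pi)})_s\pi_{s,a}$,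 and $\rho_z^{(\pi)}=\sum_{s,a}(\Lambda_z^{(\pi)})_{s,a}\rho_{s,a}$. A policy satisfies demographic parity if $\rho_{\mathrm{maj}}^{(\pi)}=\rho_{\mathrm{min}}^{(\pi)}$; $\Pi_{\mathrm{DP}}$ is the set of such policies. Problem (P): maximize $R^{(\pi)}$ over $\pi\in\Pi_{\mathrm{DP}}$. The MDP is separable if there is a transition kernel $\tilde P$ on $\tilde S$ (i.e. $\tilde P_{\tilde s,a,\tilde s'}\ge0$, $\sum_{\tilde s'}\tilde P_{\tilde s,a,\tilde s'}=1$) such that $P_{(z,\tilde s),a,(z',\tilde s')}=\mathbb{I}[z=z']\,\tilde P_{\tilde s,a,\tilde s'}$ for all $z,z'\in Z$, $\tilde s,\tilde s'\in\tilde S$, $a\in A$. *)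

theory Defs
  imports "HOL-Analysis.Analysis"
begin

datatype grp = Maj | Min

lemma UNIV_grp: "(UNIV :: grp set) = {Maj, Min}"
  using grp.exhaust by auto

instance grp :: finite
  by standard (simp add: UNIV_grp)

text \<open>States are pairs (z, s~); actions range over a finite type 'a.
  D : distribution on S, P s a s' : transition kernel, R : rewards, g : discount.\<close>

definition is_dist :: "('s::finite \<Rightarrow> real) \<Rightarrow> bool" where
  "is_dist \<mu> \<longleftrightarrow> (\<forall>s. \<mu> s \<ge> 0) \<and> (\<Sum>s\<in>UNIV. \<mu> s) = 1"

definition is_kernel :: "('s::finite \<Rightarrow> 'a::finite \<Rightarrow> 's \<Rightarrow> real) \<Rightarrow> bool" where
  "is_kernel P \<longleftrightarrow> (\<forall>s a s'. P s a s' \<ge> 0) \<and> (\<forall>s a. (\<Sum>s'\<in>UNIV. P s a s') = 1)"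

definition is_mdp :: "('s::finite \<Rightarrow> real) \<Rightarrow> ('s \<Rightarrow> 'a::finite \<Rightarrow> 's \<Rightarrow> real) \<Rightarrow> real \<Rightarrow> bool" where
  "is_mdp D P g \<longleftrightarrow> is_dist D \<and> is_kernel P \<and> 0 < g \<and> g < 1"

definition is_policy :: "('s::finite \<Rightarrow> 'a::finite \<Rightarrow> real) \<Rightarrow> bool" where
  "is_policy \<pi> \<longleftrightarrow> (\<forall>s a. \<pi> s a \<ge> 0) \<and> (\<forall>s. (\<Sum>a\<in>UNIV. \<pi> s a) = 1)"

definition Ppol :: "('s::finite \<Rightarrow> 'a::finite \<Rightarrow> 's \<Rightarrow> real) \<Rightarrow> ('s \<Rightarrow> 'a \<Rightarrow> real) \<Rightarrow> 's \<Rightarrow> 's \<Rightarrow> real" where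
  "Ppol P \<pi> s s' = (\<Sum>a\<in>UNIV. \<pi> s a * P s a s')"

fun mu_step :: "('s::finite \<Rightarrow> 'a::finite \<Rightarrow> 's \<Rightarrow> real) \<Rightarrow> ('s \<Rightarrow> 'a \<Rightarrow> real) \<Rightarrow> ('s \<Rightarrow> real) \<Rightarrow> nat \<Rightarrow> 's \<Rightarrow> real" where
  "mu_step P \<pi> \<mu> 0 = \<mu>"
| "mu_step P \<pi> \<mu> (Suc t) = (\<lambda>s'. \<Sum>s\<in>UNIV. mu_step P \<pi> \<mu> t s * Ppol P \<pi> s s')"

definition occ :: "('s::finite \<Rightarrow> 'a::finite \<Rightarrow> 's \<Rightarrow> real) \<Rightarrow> real \<Rightarrow> ('s \<Rightarrow> 'a \<Rightarrow> real) \<Rightarrow> ('s \<Rightarrow> real) \<Rightarrow> 's \<Rightarrow> real" where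
  "occ P g \<pi> \<mu> s = (1 - g) * (\<Sum>t. g ^ t * mu_step P \<pi> \<mu> t s)"

definition Rval :: "('s::finite \<Rightarrow> real) \<Rightarrow> ('s \<Rightarrow> 'a::finite \<Rightarrow> 's \<Rightarrow> real) \<Rightarrow> ('s \<Rightarrow> 'a \<Rightarrow> real) \<Rightarrow> real \<Rightarrow> ('s \<Rightarrow> 'a \<Rightarrow> real) \<Rightarrow> real" where
  "Rval D P R g \<pi> = inverse (1 - g) * (\<Sum>s\<in>UNIV. \<Sum>a\<in>UNIV. occ P g \<pi> D s * \<pi> s a * R s a)"

definition pgrp :: "(grp \<times> 't::finite \<Rightarrow> real) \<Rightarrow> grp \<Rightarrow> real" where
  "pgrp D z = (\<Sum>t\<in>UNIV. D (z, t))"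

definition Dgrp :: "(grp \<times> 't::finite \<Rightarrow> real) \<Rightarrow> grp \<Rightarrow> grp \<times> 't \<Rightarrow> real" where
  "Dgrp D z s = D s * (if fst s = z then 1 else 0) / pgrp D z"

definition rho_grp :: "(grp \<times> 't::finite \<Rightarrow> real) \<Rightarrow> (grp \<times> 't \<Rightarrow> 'a::finite \<Rightarrow> grp \<times> 't \<Rightarrow> real)
    \<Rightarrow> (grp \<times> 't \<Rightarrow> 'a \<Rightarrow> real) \<Rightarrow> real \<Rightarrow> (grp \<times> 't \<Rightarrow> 'a \<Rightarrow> real) \<Rightarrow> grp \<Rightarrow> real" where
  "rho_grp D P \<rho> g \<pi> z = (\<Sum>s\<in>UNIV. \<Sum>a\<in>UNIV. occ P g \<pi> (Dgrp D z) s * \<pi> s a * \<rho> s a)"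

definition Pi_DP :: "(grp \<times> 't::finite \<Rightarrow> real) \<Rightarrow> (grp \<times> 't \<Rightarrow> 'a::finite \<Rightarrow> grp \<times> 't \<Rightarrow> real)
    \<Rightarrow> (grp \<times> 't \<Rightarrow> 'a \<Rightarrow> real) \<Rightarrow> real \<Rightarrow> (grp \<times> 't \<Rightarrow> 'a \<Rightarrow> real) set" where
  "Pi_DP D P \<rho> g = {\<pi>. is_policy \<pi> \<and> rho_grp D P \<rho> g \<pi> Maj = rho_grp D P \<rho> g \<pi> Min}"

definition P_optimal :: "(grp \<times> 't::finite \<Rightarrow> real) \<Rightarrow> (grp \<times> 't \<Rightarrow> 'a::finite \<Rightarrow> grp \<times> 't \<Rightarrow> real)
    \<Rightarrow> (grp \<times> 't \<Rightarrow> 'a \<Rightarrow> real) \<Rightarrow> (grp \<times> 't \<Rightarrow> 'a \<Rightarrow> real) \<Rightarrow> real \<Rightarrow> (grp \<times> 't \<Rightarrow> 'a \<Rightarrow> real) \<Rightarrow> bool" where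
  "P_optimal D P R \<rho> g \<pi> \<longleftrightarrow> \<pi> \<in> Pi_DP D P \<rho> g \<and>
     (\<forall>\<pi>'\<in>Pi_DP D P \<rho> g. Rval D P R g \<pi>' \<le> Rval D P R g \<pi>)"

definition separable :: "(grp \<times> 't::finite \<Rightarrow> 'a::finite \<Rightarrow> grp \<times> 't \<Rightarrow> real) \<Rightarrow> bool" where
  "separable P \<longleftrightarrow> (\<exists>Pt :: 't \<Rightarrow> 'a \<Rightarrow> 't \<Rightarrow> real. is_kernel Pt \<and>
     (\<forall>z z' t t' a. P (z, t) a (z', t') = (if z = z' then Pt t a t' else 0)))"

definition lp_obj :: "('s::finite \<Rightarrow> 'a::finite \<Rightarrow> real) \<Rightarrow> real \<Rightarrow> ('s \<Rightarrow> 'a \<Rightarrow> real) \<Rightarrow> real" where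
  "lp_obj R g l = inverse (1 - g) * (\<Sum>s\<in>UNIV. \<Sum>a\<in>UNIV. l s a * R s a)"

definition lp_feasible :: "(grp \<times> 't::finite \<Rightarrow> real) \<Rightarrow> (grp \<times> 't \<Rightarrow> 'a::finite \<Rightarrow> grp \<times> 't \<Rightarrow> real)
    \<Rightarrow> (grp \<times> 't \<Rightarrow> 'a \<Rightarrow> real) \<Rightarrow> real \<Rightarrow> (grp \<times> 't \<Rightarrow> 'a \<Rightarrow> real) \<Rightarrow> real \<Rightarrow> bool" where
  "lp_feasible D P \<rho> g l c \<longleftrightarrow>
     (\<forall>s a. l s a \<ge> 0) \<and>
     (\<forall>s'. (\<Sum>a\<in>UNIV. l s' a) = (1 - g) * D s' + g * (\<Sum>s\<in>UNIV. \<Sum>a\<in>UNIV. l s a * P s a s')) \<and>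
     (\<forall>z. inverse (pgrp D z) * (\<Sum>t\<in>UNIV. \<Sum>a\<in>UNIV. l (z, t) a * \<rho> (z, t) a) = c)"

definition lp_optimal :: "(grp \<times> 't::finite \<Rightarrow> real) \<Rightarrow> (grp \<times> 't \<Rightarrow> 'a::finite \<Rightarrow> grp \<times> 't \<Rightarrow> real)
    \<Rightarrow> (grp \<times> 't \<Rightarrow> 'a \<Rightarrow> real) \<Rightarrow> (grp \<times> 't \<Rightarrow> 'a \<Rightarrow> real) \<Rightarrow> real \<Rightarrow> (grp \<times> 't \<Rightarrow> 'a \<Rightarrow> real) \<Rightarrow> real \<Rightarrow> bool" where
  "lp_optimal D P R \<rho> g l c \<longleftrightarrow> lp_feasible D P \<rho> g l c \<and>
     (\<forall>l' c'. lp_feasible D P \<rho> g l' c' \<longrightarrow> lp_obj R g l' \<le> lp_obj R g l)"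

definition induced_policy :: "('s::finite \<Rightarrow> 'a::finite \<Rightarrow> real) \<Rightarrow> ('s \<Rightarrow> 'a \<Rightarrow> real) \<Rightarrow> bool" where
  "induced_policy l \<pi> \<longleftrightarrow> (\<forall>s.
     (if (\<Sum>a'\<in>UNIV. l s a') > 0
      then (\<forall>a. \<pi> s a = l s a / (\<Sum>a'\<in>UNIV. l s a'))
      else (\<forall>a. \<pi> s a \<ge> 0) \<and> (\<Sum>a\<in>UNIV. \<pi> s a) = 1))"

end

theory Submission
  imports Defs
begin

text \<open>
  The occupancy measure \<open>\<Lambda>(\<pi>) s a = D(\<pi>) s * \<pi> s a\<close> of a policy satisfies the Bellman flow
  constraints of the LP. Conversely, a nonnegative solution \<open>\<lambda>\<close> of the flow constraints factors
  as \<open>\<lambda> s a = d s * \<pi> s a\<close> with \<open>\<pi>\<close> the induced policy, and its state marginal \<open>d\<close> is a fixed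
  point of \<open>d \<mapsto> (1 - \<gamma>) D + \<gamma> d P(\<pi>)\<close>; this map is an \<open>\<ell>\<^sub>1\<close>-contraction with factor \<open>\<gamma>\<close>, so
  \<open>d = D(\<pi>)\<close> and \<open>\<lambda> = \<Lambda>(\<pi>)\<close>. In a separable MDP a chain started in group \<open>z\<close> never leaves it,
  hence \<open>D\<^sub>z(\<pi>)\<close> is the restriction of \<open>D(\<pi>)\<close> to group \<open>z\<close> divided by \<open>p\<^sub>z\<close>. Therefore the
  fairness constraint of the LP at \<open>\<Lambda>(\<pi>)\<close> reads \<open>\<rho>\<^sub>z(\<pi>) = c\<close>, and the objective at \<open>\<Lambda>(\<pi>)\<close> is
  \<open>R(\<pi>)\<close>: the LP is problem (P) rewritten in the variables \<open>\<Lambda>(\<pi>)\<close>. Its feasible set has total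
  mass \<open>1\<close>, so it is compact and the LP attains its maximum.
\<close>

definition occ_measure :: "('s::finite \<Rightarrow> 'a::finite \<Rightarrow> 's \<Rightarrow> real) \<Rightarrow> real \<Rightarrow> ('s \<Rightarrow> 'a \<Rightarrow> real)
    \<Rightarrow> ('s \<Rightarrow> real) \<Rightarrow> 's \<Rightarrow> 'a \<Rightarrow> real" where
  "occ_measure P g \<pi> \<mu> s a = occ P g \<pi> \<mu> s * \<pi> s a"

definition bellman_flow :: "('s::finite \<Rightarrow> 'a::finite \<Rightarrow> 's \<Rightarrow> real) \<Rightarrow> real \<Rightarrow> ('s \<Rightarrow> real)
    \<Rightarrow> ('s \<Rightarrow> 'a \<Rightarrow> real) \<Rightarrow> bool" where
  "bellman_flow P g \<mu> l \<longleftrightarrow>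
     (\<forall>s'. (\<Sum>a\<in>UNIV. l s' a) = (1 - g) * \<mu> s' + g * (\<Sum>s\<in>UNIV. \<Sum>a\<in>UNIV. l s a * P s a s'))"

definition group_reward :: "(grp \<times> 't::finite \<Rightarrow> real) \<Rightarrow> (grp \<times> 't \<Rightarrow> 'a::finite \<Rightarrow> real)
    \<Rightarrow> (grp \<times> 't \<Rightarrow> 'a \<Rightarrow> real) \<Rightarrow> grp \<Rightarrow> real" where
  "group_reward D \<rho> l z = inverse (pgrp D z) * (\<Sum>t\<in>UNIV. \<Sum>a\<in>UNIV. l (z, t) a * \<rho> (z, t) a)"

lemma is_mdpD:
  assumes "is_mdp D P g"
  shows "is_kernel P" "\<forall>s. 0 \<le> D s" "(\<Sum>s\<in>UNIV. D s) = 1" "0 \<le> g" "g < 1"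
  using assms unfolding is_mdp_def is_dist_def by auto

lemma Ppol_nonneg: "is_kernel P \<Longrightarrow> is_policy \<pi> \<Longrightarrow> 0 \<le> Ppol P \<pi> s s'"
  unfolding is_kernel_def is_policy_def Ppol_def by (auto intro: sum_nonneg)

lemma sum_Ppol:
  assumes "is_kernel P" "is_policy \<pi>"
  shows "(\<Sum>s'\<in>UNIV. Ppol P \<pi> s s') = 1"
proof -
  have "(\<Sum>s'\<in>UNIV. Ppol P \<pi> s s') = (\<Sum>a\<in>UNIV. \<pi> s a * (\<Sum>s'\<in>UNIV. P s a s'))"
    unfolding Ppol_def by (subst sum.swap) (simp add: sum_distrib_left)
  then show ?thesis using assms unfolding is_kernel_def is_policy_def by simp
qed

lemma mu_step_nonneg:
  assumes "is_kernel P" "is_policy \<pi>" "\<forall>s. 0 \<le> \<mu> s"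
  shows "0 \<le> mu_step P \<pi> \<mu> t s"
  using assms by (induction t arbitrary: s) (auto intro!: sum_nonneg mult_nonneg_nonneg Ppol_nonneg)

lemma sum_mu_step:
  assumes "is_kernel P" "is_policy \<pi>"
  shows "(\<Sum>s\<in>UNIV. mu_step P \<pi> \<mu> t s) = (\<Sum>s\<in>UNIV. \<mu> s)"
proof (induction t)
  case (Suc t)
  have "(\<Sum>s\<in>UNIV. mu_step P \<pi> \<mu> (Suc t) s)
      = (\<Sum>s\<in>UNIV. mu_step P \<pi> \<mu> t s * (\<Sum>s'\<in>UNIV. Ppol P \<pi> s s'))"
    by (simp add: sum_distrib_left) (rule sum.swap)
  then show ?case using Suc sum_Ppol[OF assms] by simp
qed simp

lemma summable_mu_step:
  assumes "is_kernel P" "is_policy \<pi>" "\<forall>s. 0 \<le> \<mu> s" "0 \<le> g" "g < 1"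
  shows "summable (\<lambda>t. g ^ t * mu_step P \<pi> \<mu> t s)"
proof (rule summable_comparison_test')
  show "summable (\<lambda>t. g ^ t * (\<Sum>s\<in>UNIV. \<mu> s))"
    using assms by (intro summable_mult2 summable_geometric) auto
  fix t
  have "mu_step P \<pi> \<mu> t s \<le> (\<Sum>s\<in>UNIV. mu_step P \<pi> \<mu> t s)"
    by (rule member_le_sum) (auto intro: mu_step_nonneg[OF assms(1-3)])
  then show "norm (g ^ t * mu_step P \<pi> \<mu> t s) \<le> g ^ t * (\<Sum>s\<in>UNIV. \<mu> s)"
    using mu_step_nonneg[OF assms(1-3)] sum_mu_step[OF assms(1,2)] assms(4)
    by (simp add: abs_mult mult_left_mono)
qed

lemma occ_nonneg:
  assumes "is_kernel P" "is_policy \<pi>" "\<forall>s. 0 \<le> \<mu> s" "0 \<le> g" "g < 1"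
  shows "0 \<le> occ P g \<pi> \<mu> s"
  unfolding occ_def using assms mu_step_nonneg[OF assms(1-3)]
  by (intro mult_nonneg_nonneg suminf_nonneg summable_mu_step) auto

lemma occ_fixed_point:
  assumes "is_kernel P" "is_policy \<pi>" "\<forall>s. 0 \<le> \<mu> s" "0 \<le> g" "g < 1"
  shows "occ P g \<pi> \<mu> s' = (1 - g) * \<mu> s' + g * (\<Sum>s\<in>UNIV. occ P g \<pi> \<mu> s * Ppol P \<pi> s s')"
proof -
  define S where "S s = (\<Sum>t. g ^ t * mu_step P \<pi> \<mu> t s)" for s
  have summable: "summable (\<lambda>t. g ^ t * mu_step P \<pi> \<mu> t s)" for s
    by (rule summable_mu_step[OF assms])
  have "(\<Sum>t. g ^ Suc t * mu_step P \<pi> \<mu> (Suc t) s')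
      = (\<Sum>t. g * (\<Sum>s\<in>UNIV. g ^ t * mu_step P \<pi> \<mu> t s * Ppol P \<pi> s s'))"
    by (simp add: sum_distrib_left mult_ac)
  also have "\<dots> = g * (\<Sum>s\<in>UNIV. S s * Ppol P \<pi> s s')"
    using summable unfolding S_def
    by (simp add: suminf_mult summable_sum summable_mult2 suminf_sum suminf_mult2[symmetric])
  finally have S_fixed: "S s' = \<mu> s' + g * (\<Sum>s\<in>UNIV. S s * Ppol P \<pi> s s')"
    using suminf_split_head[OF summable[of s']] unfolding S_def by simp
  have occ: "occ P g \<pi> \<mu> s = (1 - g) * S s" for s
    unfolding occ_def S_def ..
  have "occ P g \<pi> \<mu> s' = (1 - g) * \<mu> s' + g * ((1 - g) * (\<Sum>s\<in>UNIV. S s * Ppol P \<pi> s s'))"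
    unfolding occ S_fixed by (simp add: algebra_simps)
  also have "(1 - g) * (\<Sum>s\<in>UNIV. S s * Ppol P \<pi> s s') = (\<Sum>s\<in>UNIV. occ P g \<pi> \<mu> s * Ppol P \<pi> s s')"
    by (simp add: occ sum_distrib_left mult_ac)
  finally show ?thesis .
qed

lemma sum_abs_stochastic_le:
  fixes e :: "'s::finite \<Rightarrow> real"
  assumes "\<And>s s'. 0 \<le> Q s s'" "\<And>s. (\<Sum>s'\<in>UNIV. Q s s') = 1"
  shows "(\<Sum>s'\<in>UNIV. \<bar>\<Sum>s\<in>UNIV. e s * Q s s'\<bar>) \<le> (\<Sum>s\<in>UNIV. \<bar>e s\<bar>)"
proof -
  have "(\<Sum>s'\<in>UNIV. \<bar>\<Sum>s\<in>UNIV. e s * Q s s'\<bar>) \<le> (\<Sum>s'\<in>UNIV. \<Sum>s\<in>UNIV. \<bar>e s\<bar> * Q s s')"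
    using assms(1) by (intro sum_mono order.trans[OF sum_abs]) (simp add: abs_mult)
  also have "\<dots> = (\<Sum>s\<in>UNIV. \<bar>e s\<bar> * (\<Sum>s'\<in>UNIV. Q s s'))"
    by (subst sum.swap) (simp add: sum_distrib_left)
  finally show ?thesis using assms(2) by simp
qed

lemma occ_unique_fixed_point:
  assumes "is_kernel P" "is_policy \<pi>" "\<forall>s. 0 \<le> \<mu> s" "0 \<le> g" "g < 1"
    and d: "\<And>s'. d s' = (1 - g) * \<mu> s' + g * (\<Sum>s\<in>UNIV. d s * Ppol P \<pi> s s')"
  shows "d = occ P g \<pi> \<mu>"
proof -
  define e where "e s = d s - occ P g \<pi> \<mu> s" for s
  have e: "e s' = g * (\<Sum>s\<in>UNIV. e s * Ppol P \<pi> s s')" for s'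
    using d[of s'] occ_fixed_point[where s'=s', OF assms(1-5)]
    by (simp add: e_def algebra_simps sum_subtractf)
  have "\<bar>e s'\<bar> = g * \<bar>\<Sum>s\<in>UNIV. e s * Ppol P \<pi> s s'\<bar>" for s'
    using assms(4) by (subst e) (simp add: abs_mult)
  then have "(\<Sum>s'\<in>UNIV. \<bar>e s'\<bar>) = g * (\<Sum>s'\<in>UNIV. \<bar>\<Sum>s\<in>UNIV. e s * Ppol P \<pi> s s'\<bar>)"
    by (simp add: sum_distrib_left)
  also have "\<dots> \<le> g * (\<Sum>s\<in>UNIV. \<bar>e s\<bar>)"
    using assms(4) Ppol_nonneg[OF assms(1,2)] sum_Ppol[OF assms(1,2)]
    by (intro mult_left_mono sum_abs_stochastic_le) auto
  finally have "(\<Sum>s\<in>UNIV. \<bar>e s\<bar>) = 0"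
    using assms(5) sum_nonneg[of UNIV "\<lambda>s. \<bar>e s\<bar>"] by (smt (verit) mult_le_cancel_right1)
  then have "e s = 0" for s using sum_nonneg_eq_0_iff[of UNIV "\<lambda>s. \<bar>e s\<bar>"] by simp
  then show ?thesis unfolding e_def by auto
qed

lemma bellman_flow_occ_measure:
  assumes "is_kernel P" "is_policy \<pi>" "\<forall>s. 0 \<le> \<mu> s" "0 \<le> g" "g < 1"
  shows "bellman_flow P g \<mu> (occ_measure P g \<pi> \<mu>)"
proof -
  have marginal: "(\<Sum>a\<in>UNIV. occ_measure P g \<pi> \<mu> s a) = occ P g \<pi> \<mu> s" for s
    using assms(2) by (simp add: occ_measure_def is_policy_def sum_distrib_left[symmetric])
  have transition: "(\<Sum>a\<in>UNIV. occ_measure P g \<pi> \<mu> s a * P s a s') = occ P g \<pi> \<mu> s * Ppol P \<pi> s s'"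
    for s s'
    by (simp add: occ_measure_def Ppol_def sum_distrib_left mult_ac)
  show ?thesis
    unfolding bellman_flow_def marginal transition using occ_fixed_point[OF assms] by blast
qed

lemma induced_policy_exists: "\<exists>\<pi>. induced_policy (l :: 's::finite \<Rightarrow> 'a::finite \<Rightarrow> real) \<pi>"
proof
  show "induced_policy l (\<lambda>s a. if (\<Sum>a'\<in>UNIV. l s a') > 0 then l s a / (\<Sum>a'\<in>UNIV. l s a')
                                 else 1 / real CARD('a))"
    unfolding induced_policy_def by auto
qed

lemma
  assumes "\<forall>s a. 0 \<le> l s a" "induced_policy l \<pi>"
  shows induced_policy_is_policy: "is_policy \<pi>"
    and induced_policy_factor: "l s a = (\<Sum>a'\<in>UNIV. l s a') * \<pi> s a"
proof -
  have row: "if (\<Sum>a'\<in>UNIV. l s a') > 0 then (\<forall>a. \<pi> s a = l s a / (\<Sum>a'\<in>UNIV. l s a'))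
             else (\<forall>a. \<pi> s a \<ge> 0) \<and> (\<Sum>a\<in>UNIV. \<pi> s a) = 1" for s
    using assms(2) unfolding induced_policy_def by blast
  have "0 \<le> \<pi> s a \<and> (\<Sum>a\<in>UNIV. \<pi> s a) = 1" for s a
    using row[of s] assms(1) by (auto split: if_splits simp: sum_divide_distrib[symmetric])
  then show "is_policy \<pi>" unfolding is_policy_def by blast
  show "l s a = (\<Sum>a'\<in>UNIV. l s a') * \<pi> s a"
  proof (cases "(\<Sum>a'\<in>UNIV. l s a') > 0")
    case False
    moreover have "0 \<le> (\<Sum>a'\<in>UNIV. l s a')" using assms(1) by (simp add: sum_nonneg)
    ultimately have "(\<Sum>a'\<in>UNIV. l s a') = 0" by linarith
    then show ?thesis using assms(1) sum_nonneg_eq_0_iff[of UNIV "l s"] by simp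
  qed (use row[of s] in simp)
qed

lemma occ_measure_of_induced_policy:
  assumes "is_kernel P" "\<forall>s. 0 \<le> \<mu> s" "0 \<le> g" "g < 1"
    and "\<forall>s a. 0 \<le> l s a" "bellman_flow P g \<mu> l" "induced_policy l \<pi>"
  shows "occ_measure P g \<pi> \<mu> = l"
proof -
  define d where "d s = (\<Sum>a\<in>UNIV. l s a)" for s
  note l_eq = induced_policy_factor[OF assms(5,7), folded d_def]
  have transition: "(\<Sum>a\<in>UNIV. l s a * P s a s') = d s * Ppol P \<pi> s s'" for s s'
    by (subst l_eq) (simp add: Ppol_def sum_distrib_left mult_ac)
  have "d s' = (1 - g) * \<mu> s' + g * (\<Sum>s\<in>UNIV. d s * Ppol P \<pi> s s')" for s'
    using assms(6) unfolding bellman_flow_def d_def[symmetric] transition by blast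
  then have "d = occ P g \<pi> \<mu>"
    by (rule occ_unique_fixed_point[OF assms(1) induced_policy_is_policy[OF assms(5,7)] assms(2-4)])
  then show ?thesis using l_eq by (simp add: occ_measure_def fun_eq_iff)
qed

lemma Rval_eq_lp_obj: "Rval D P R g \<pi> = lp_obj R g (occ_measure P g \<pi> D)"
  by (simp add: Rval_def lp_obj_def occ_measure_def)

lemma sum_UNIV_prod: "(\<Sum>s\<in>UNIV. f s) = (\<Sum>w\<in>UNIV. \<Sum>x\<in>UNIV. f (w, x))"
  by (simp add: sum.cartesian_product)

lemma Ppol_separable_cross_group:
  "separable P \<Longrightarrow> w \<noteq> z \<Longrightarrow> Ppol P \<pi> (w, y) (z, x) = 0"
  unfolding separable_def Ppol_def by auto

lemma mu_step_Suc_separable: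
  assumes "separable P"
  shows "mu_step P \<pi> \<mu> (Suc t) (z, x) = (\<Sum>y\<in>UNIV. mu_step P \<pi> \<mu> t (z, y) * Ppol P \<pi> (z, y) (z, x))"
proof -
  have "mu_step P \<pi> \<mu> (Suc t) (z, x)
      = (\<Sum>w\<in>UNIV. \<Sum>y\<in>UNIV. mu_step P \<pi> \<mu> t (w, y) * Ppol P \<pi> (w, y) (z, x))"
    unfolding mu_step.simps by (rule sum_UNIV_prod)
  also have "\<dots> = (\<Sum>w\<in>UNIV. if w = z
                      then \<Sum>y\<in>UNIV. mu_step P \<pi> \<mu> t (z, y) * Ppol P \<pi> (z, y) (z, x) else 0)"
    by (intro sum.cong) (auto simp: Ppol_separable_cross_group[OF assms])
  finally show ?thesis by simp
qed

lemma mu_step_Dgrp: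
  assumes "separable P" "0 < pgrp D z"
  shows "mu_step P \<pi> (Dgrp D z) t (w, x) = (if w = z then mu_step P \<pi> D t (z, x) / pgrp D z else 0)"
proof (induction t arbitrary: x)
  case 0
  then show ?case by (simp add: Dgrp_def)
next
  case (Suc t)
  have "mu_step P \<pi> (Dgrp D z) (Suc t) (w, x)
      = (\<Sum>y\<in>UNIV. mu_step P \<pi> (Dgrp D z) t (w, y) * Ppol P \<pi> (w, y) (w, x))"
    by (rule mu_step_Suc_separable[OF assms(1)])
  also have "\<dots> = (if w = z then (\<Sum>y\<in>UNIV. mu_step P \<pi> D t (z, y) * Ppol P \<pi> (z, y) (z, x)) / pgrp D z
                   else 0)"
    by (simp add: Suc.IH sum_divide_distrib)
  also have "\<dots> = (if w = z then mu_step P \<pi> D (Suc t) (z, x) / pgrp D z else 0)"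
    by (simp only: mu_step_Suc_separable[OF assms(1)])
  finally show ?case .
qed

lemma occ_Dgrp:
  assumes "is_kernel P" "is_policy \<pi>" "\<forall>s. 0 \<le> D s" "0 \<le> g" "g < 1"
    and "separable P" "0 < pgrp D z"
  shows "occ P g \<pi> (Dgrp D z) (w, x) = (if w = z then occ P g \<pi> D (z, x) / pgrp D z else 0)"
  using suminf_divide[OF summable_mu_step[OF assms(1-5)]]
  by (simp add: occ_def mu_step_Dgrp[OF assms(6,7)])

lemma rho_grp_eq_group_reward:
  assumes "is_kernel P" "is_policy \<pi>" "\<forall>s. 0 \<le> D s" "0 \<le> g" "g < 1"
    and "separable P" "0 < pgrp D z"
  shows "rho_grp D P \<rho> g \<pi> z = group_reward D \<rho> (occ_measure P g \<pi> D) z"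
proof -
  have "rho_grp D P \<rho> g \<pi> z
      = (\<Sum>w\<in>UNIV. \<Sum>x\<in>UNIV. \<Sum>a\<in>UNIV. occ P g \<pi> (Dgrp D z) (w, x) * \<pi> (w, x) a * \<rho> (w, x) a)"
    unfolding rho_grp_def by (rule sum_UNIV_prod)
  also have "\<dots> = (\<Sum>w\<in>UNIV. if w = z
        then \<Sum>x\<in>UNIV. \<Sum>a\<in>UNIV. occ P g \<pi> D (z, x) / pgrp D z * \<pi> (z, x) a * \<rho> (z, x) a else 0)"
    by (intro sum.cong) (simp_all add: occ_Dgrp[OF assms])
  also have "\<dots> = group_reward D \<rho> (occ_measure P g \<pi> D) z"
    by (simp add: group_reward_def occ_measure_def sum_distrib_left divide_inverse mult_ac)
  finally show ?thesis .
qed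

lemma lp_feasible_iff:
  "lp_feasible D P \<rho> g l c \<longleftrightarrow>
     (\<forall>s a. 0 \<le> l s a) \<and> bellman_flow P g D l \<and> (\<forall>z. group_reward D \<rho> l z = c)"
  unfolding lp_feasible_def bellman_flow_def group_reward_def by simp

lemma ex_lp_feasible_iff:
  "(\<exists>c. lp_feasible D P \<rho> g l c) \<longleftrightarrow>
     (\<forall>s a. 0 \<le> l s a) \<and> bellman_flow P g D l \<and> group_reward D \<rho> l Maj = group_reward D \<rho> l Min"
proof -
  have all_grp: "(\<forall>z. Q z) \<longleftrightarrow> Q Maj \<and> Q Min" for Q
    by (metis grp.exhaust)
  show ?thesis
    unfolding lp_feasible_iff all_grp by auto
qed

lemma bellman_flow_total_mass:
  assumes "is_kernel P" "(\<Sum>s\<in>UNIV. \<mu> s) = 1" "g < 1" "bellman_flow P g \<mu> l"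
  shows "(\<Sum>s\<in>UNIV. \<Sum>a\<in>UNIV. l s a) = 1"
proof -
  define T where "T = (\<Sum>s\<in>UNIV. \<Sum>a\<in>UNIV. l s a)"
  have "(\<Sum>s'\<in>UNIV. \<Sum>s\<in>UNIV. \<Sum>a\<in>UNIV. l s a * P s a s')
      = (\<Sum>s\<in>UNIV. \<Sum>a\<in>UNIV. \<Sum>s'\<in>UNIV. l s a * P s a s')"
    by (subst sum.swap) (intro sum.cong refl sum.swap)
  also have "\<dots> = T"
    using assms(1) unfolding T_def is_kernel_def by (simp add: sum_distrib_left[symmetric])
  finally have flow_mass: "(\<Sum>s'\<in>UNIV. \<Sum>s\<in>UNIV. \<Sum>a\<in>UNIV. l s a * P s a s') = T" .
  have "T = (\<Sum>s'\<in>UNIV. (1 - g) * \<mu> s' + g * (\<Sum>s\<in>UNIV. \<Sum>a\<in>UNIV. l s a * P s a s'))"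
    using assms(4) unfolding T_def bellman_flow_def by (intro sum.cong refl) blast
  also have "\<dots> = (1 - g) + g * T"
    using assms(2) flow_mass by (simp add: sum.distrib sum_distrib_left[symmetric])
  finally have "(1 - g) * T = (1 - g) * 1" by (simp add: algebra_simps)
  then show ?thesis using assms(3) unfolding T_def by simp
qed

lemma entry_le_double_sum:
  fixes l :: "'s::finite \<Rightarrow> 'a::finite \<Rightarrow> real"
  assumes "\<And>s a. 0 \<le> l s a"
  shows "l s a \<le> (\<Sum>s\<in>UNIV. \<Sum>a\<in>UNIV. l s a)"
proof -
  have "l s a \<le> (\<Sum>a\<in>UNIV. l s a)"
    using assms by (intro member_le_sum) auto
  also have "\<dots> \<le> (\<Sum>s\<in>UNIV. \<Sum>a\<in>UNIV. l s a)"
    using assms by (intro member_le_sum sum_nonneg) auto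
  finally show ?thesis .
qed

lemma lp_optimal_exists:
  fixes D :: "grp \<times> 't::finite \<Rightarrow> real" and P :: "grp \<times> 't \<Rightarrow> 'a::finite \<Rightarrow> grp \<times> 't \<Rightarrow> real"
  assumes "is_mdp D P g" "lp_feasible D P \<rho> g l\<^sub>0 c\<^sub>0"
  shows "\<exists>l c. lp_optimal D P R \<rho> g l c"
proof -
  \<comment> \<open>Function spaces are not Heine-Borel instances, so compactness is argued in \<open>real^(S \<times> A)\<close>.\<close>
  let ?l = "\<lambda>v :: real^((grp \<times> 't) \<times> 'a). \<lambda>s a. v $ (s, a)"
  let ?v = "\<lambda>l. \<chi> i. l (fst i) (snd i)"
  define F where "F = {v. \<exists>c. lp_feasible D P \<rho> g (?l v) c}"
  have "closed F"
    unfolding F_def ex_lp_feasible_iff bellman_flow_def group_reward_def Collect_conj_eq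
    by (intro closed_Int closed_Collect_all closed_Collect_le closed_Collect_eq continuous_intros)
  moreover have "F \<subseteq> cbox 0 1"
  proof
    fix v assume "v \<in> F"
    then have nonneg: "\<And>s a. 0 \<le> ?l v s a" and "bellman_flow P g D (?l v)"
      unfolding F_def ex_lp_feasible_iff by auto
    then have "(\<Sum>s\<in>UNIV. \<Sum>a\<in>UNIV. ?l v s a) = 1"
      using is_mdpD[OF assms(1)] by (intro bellman_flow_total_mass) auto
    moreover have "?l v s a \<le> (\<Sum>s\<in>UNIV. \<Sum>a\<in>UNIV. ?l v s a)" for s a
      using nonneg by (rule entry_le_double_sum)
    ultimately show "v \<in> cbox 0 1"
      using nonneg by (auto simp: mem_box_cart)
  qed
  ultimately have "compact F" by (metis compact_cbox compact_Int_closed inf.absorb2)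
  moreover have "?v l\<^sub>0 \<in> F" unfolding F_def using assms(2) by auto
  then have "F \<noteq> {}" by blast
  moreover have "continuous_on F (\<lambda>v. lp_obj R g (?l v))"
    unfolding lp_obj_def by (intro continuous_intros)
  ultimately obtain v where "v \<in> F" and max: "\<forall>w\<in>F. lp_obj R g (?l w) \<le> lp_obj R g (?l v)"
    using continuous_attains_sup by blast
  then obtain c where "lp_feasible D P \<rho> g (?l v) c" unfolding F_def by blast
  moreover have "lp_obj R g l \<le> lp_obj R g (?l v)" if "lp_feasible D P \<rho> g l c" for l c
    using max[rule_format, of "?v l"] that unfolding F_def by auto
  ultimately show ?thesis unfolding lp_optimal_def by blast
qed

lemma lp_feasible_occ_measure:
  assumes "is_mdp D P g" "separable P" "\<And>z. 0 < pgrp D z" "\<pi> \<in> Pi_DP D P \<rho> g"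
  shows "lp_feasible D P \<rho> g (occ_measure P g \<pi> D) (rho_grp D P \<rho> g \<pi> Maj)"
proof -
  note mdp = is_mdpD[OF assms(1)]
  have \<pi>: "is_policy \<pi>" and "rho_grp D P \<rho> g \<pi> Min = rho_grp D P \<rho> g \<pi> Maj"
    using assms(4) unfolding Pi_DP_def by auto
  then have "rho_grp D P \<rho> g \<pi> z = rho_grp D P \<rho> g \<pi> Maj" for z by (cases z) auto
  then show ?thesis
    unfolding lp_feasible_iff
    using rho_grp_eq_group_reward[OF mdp(1) \<pi> mdp(2,4,5) assms(2,3)]
      occ_nonneg[OF mdp(1) \<pi> mdp(2,4,5)] bellman_flow_occ_measure[OF mdp(1) \<pi> mdp(2,4,5)] \<pi>
    by (auto simp: occ_measure_def is_policy_def)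
qed

lemma lp_feasible_induced_policy:
  assumes "is_mdp D P g" "separable P" "\<And>z. 0 < pgrp D z"
    and "lp_feasible D P \<rho> g l c" "induced_policy l \<pi>"
  shows "\<pi> \<in> Pi_DP D P \<rho> g" and "occ_measure P g \<pi> D = l"
proof -
  note mdp = is_mdpD[OF assms(1)]
  have nonneg: "\<forall>s a. 0 \<le> l s a" and flow: "bellman_flow P g D l"
    and c: "\<And>z. group_reward D \<rho> l z = c"
    using assms(4) unfolding lp_feasible_iff by auto
  have \<pi>: "is_policy \<pi>" by (rule induced_policy_is_policy[OF nonneg assms(5)])
  show l: "occ_measure P g \<pi> D = l"
    by (rule occ_measure_of_induced_policy[OF mdp(1,2,4,5) nonneg flow assms(5)])
  show "\<pi> \<in> Pi_DP D P \<rho> g"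
    using rho_grp_eq_group_reward[OF mdp(1) \<pi> mdp(2,4,5) assms(2,3)] c \<pi>
    unfolding Pi_DP_def l by simp
qed

theorem theorem3:
  fixes D :: "grp \<times> 't::finite \<Rightarrow> real"
    and P :: "grp \<times> 't \<Rightarrow> 'a::finite \<Rightarrow> grp \<times> 't \<Rightarrow> real"
    and R \<rho> :: "grp \<times> 't \<Rightarrow> 'a \<Rightarrow> real"
    and g :: real
  assumes mdp: "is_mdp D P g"
    and sep: "separable P"
    and pmaj: "pgrp D Maj > 0"
    and pmin: "pgrp D Min > 0"
  shows "((\<exists>l c. lp_feasible D P \<rho> g l c) \<longleftrightarrow> Pi_DP D P \<rho> g \<noteq> {}) \<and>
         (Pi_DP D P \<rho> g \<noteq> {} \<longrightarrow>
            (\<exists>l c. lp_optimal D P R \<rho> g l c) \<and>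
            (\<forall>l c \<pi>. lp_optimal D P R \<rho> g l c \<longrightarrow> induced_policy l \<pi> \<longrightarrow>
                P_optimal D P R \<rho> g \<pi> \<and> Rval D P R g \<pi> = lp_obj R g l))"
proof -
  have p: "0 < pgrp D z" for z using pmaj pmin by (cases z) auto
  note to_lp = lp_feasible_occ_measure[OF mdp sep p]
  note from_lp = lp_feasible_induced_policy[OF mdp sep p]
  have feasible_iff: "(\<exists>l c. lp_feasible D P \<rho> g l c) \<longleftrightarrow> Pi_DP D P \<rho> g \<noteq> {}"
    using to_lp from_lp(1) induced_policy_exists by blast
  have "P_optimal D P R \<rho> g \<pi> \<and> Rval D P R g \<pi> = lp_obj R g l"
    if opt: "lp_optimal D P R \<rho> g l c" and ind: "induced_policy l \<pi>" for l c \<pi>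
  proof -
    have "lp_feasible D P \<rho> g l c" using opt unfolding lp_optimal_def by blast
    then have fair: "\<pi> \<in> Pi_DP D P \<rho> g" and val: "Rval D P R g \<pi> = lp_obj R g l"
      using from_lp[OF _ ind] by (auto simp: Rval_eq_lp_obj)
    have "Rval D P R g \<pi>' \<le> Rval D P R g \<pi>" if "\<pi>' \<in> Pi_DP D P \<rho> g" for \<pi>'
      using to_lp[OF that] opt val unfolding Rval_eq_lp_obj lp_optimal_def by auto
    then show ?thesis using fair val unfolding P_optimal_def by auto
  qed
  then show ?thesis using feasible_iff lp_optimal_exists[OF mdp] by blast
qed

end
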